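(* Let $E$ and $F$ be complex Banach spaces, let $A_m:\mathrm{dom}(A_m)\subseteq E\to E$ and $B:\mathrm{dom}(B)\subseteq F\to F$ be linear operators, and let $L:\mathrm{dom}(A_m)\to F$ be linear, surjective and bounded with respect to the graph norm of $A_m$. Assume that the restriction $A_0$ of $A_m$ to $\ker(L)$ generates a strongly continuous semigroup $(T_0(t))_{t\ge0}$ on $E$, that $B$ generates a strongly continuous semigroup $(S(t))_{t\ge0}$ on $F$, that $x\mapsto(A_mx,Lx)$, $\mathrm{dom}(A_m)\to E\times F$, is closed, and that $A_0$ and $B$ are boundedly invertible. Let $D_0:=(L|_{\ker(A_m)})^{-1}:F\to E$. For $y\in\mathrm{dom}(B)$ and $t\ge0$ let $Q(t)y=D_0S(t)y-T_0(t)D_0y-\int_0^tT_0(t-s)D_0S(s)By\,\mathrm{d}s$, and assume that each $Q(t)$ extends to a bounded operator $F\to E$ with $\limsup_{t\downarrow0}\|Q(t)\|<\infty$; let $(\mathcal{T}(t))_{t\ge0}$ be the $C_0$-semigroup on $E\times F$ given by $\mathcal{T}(t)=\begin{pmatrix}T_0(t)&Q(t)\\0&S(t)\end{pmatrix}$. For each $\tau>0$ let $V(\tau):\mathrm{dom}(B)\to E$ be a linear operator, put $\mathbb{T}(\tau)=\begin{pmatrix}T_0(\tau)&V(\tau)\\0&S(\tau)\end{pmatrix}$ acting on $E\times\mathrm{dom}(B)$, and let $V_k(\tau)=\sum_{j=0}^{k-1}T_0((k-1-j)\tau)V(\tau)S(j\tau)$ for $k\in\mathbb{N}$. Let $\mathcal{R}_0=\begin{pmatrix}I&-D_0\\0&I\end{pmatrix}$.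 Let $y\in\mathrm{dom}(B)$ and suppose that \[ \lim_{n\to\infty}V_n(\tfrac tn)y=-\int_0^tT_0(t-s)D_0S(s)By\,\mathrm{d}s \] uniformly for $t$ in compact subsets of $[0,\infty)$. Then for every $x\in E$ and every $t_{\max}>0$, \[ \lim_{n\to\infty}\mathcal{R}_0^{-1}\mathbb{T}(\tfrac tn)^n\mathcal{R}_0\binom{x}{y}=\mathcal{T}(t)\binom{x}{y} \] uniformly for $t\in[0,t_{\max}]$.
   Context: Under the stated assumptions $D_0$ is bounded, and the semigroup $(\mathcal{T}(t))_{t\ge0}$ is the one generated by the operator $\mathrm{diag}(A_m,B)$ on $E\times F$ with domain $\{(x,y)\in\mathrm{dom}(A_m)\times\mathrm{dom}(B):Lx=y\}$. Here $\mathcal{R}_0^{-1}=\begin{pmatrix}I&D_0\\0&I\end{pmatrix}$. *)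

theory Defs
  imports "HOL-Analysis.Analysis"
begin

text \<open>Partially defined (possibly unbounded) linear operator: a function A together
  with a linear subspace D (its domain); values of A outside D are irrelevant.\<close>
definition linear_op :: "'a::real_vector set \<Rightarrow> ('a \<Rightarrow> 'b::real_vector) \<Rightarrow> bool" where
  "linear_op D A \<longleftrightarrow> subspace D \<and>
     (\<forall>x\<in>D. \<forall>z\<in>D. A (x + z) = A x + A z) \<and>
     (\<forall>c x. x \<in> D \<longrightarrow> A (c *\<^sub>R x) = c *\<^sub>R A x)"

definition c0_semigroup :: "(real \<Rightarrow> 'a::real_normed_vector \<Rightarrow> 'a) \<Rightarrow> bool" where
  "c0_semigroup T \<longleftrightarrow> (\<forall>t\<ge>0. bounded_linear (T t)) \<and> T 0 = id \<and>
     (\<forall>s\<ge>0. \<forall>t\<ge>0. T (s + t) = T s \<circ> T t) \<and>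
     (\<forall>x. ((\<lambda>t. T t x) \<longlongrightarrow> x) (at_right 0))"

definition is_generator :: "(real \<Rightarrow> 'a::real_normed_vector \<Rightarrow> 'a) \<Rightarrow> 'a set \<Rightarrow> ('a \<Rightarrow> 'a) \<Rightarrow> bool" where
  "is_generator T D A \<longleftrightarrow>
     D = {x. \<exists>l. ((\<lambda>h. (1 / h) *\<^sub>R (T h x - x)) \<longlongrightarrow> l) (at_right 0)} \<and>
     (\<forall>x\<in>D. ((\<lambda>h. (1 / h) *\<^sub>R (T h x - x)) \<longlongrightarrow> A x) (at_right 0))"

definition generates_c0 :: "'a::real_normed_vector set \<Rightarrow> ('a \<Rightarrow> 'a) \<Rightarrow> (real \<Rightarrow> 'a \<Rightarrow> 'a) \<Rightarrow> bool" where
  "generates_c0 D A T \<longleftrightarrow> c0_semigroup T \<and> is_generator T D A"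

definition boundedly_invertible :: "'a::real_normed_vector set \<Rightarrow> ('a \<Rightarrow> 'b::real_normed_vector) \<Rightarrow> bool" where
  "boundedly_invertible D A \<longleftrightarrow> bij_betw A D UNIV \<and> bounded_linear (the_inv_into D A)"

definition dirichlet_op :: "'e set \<Rightarrow> ('e \<Rightarrow> 'e::zero) \<Rightarrow> ('e \<Rightarrow> 'f) \<Rightarrow> 'f \<Rightarrow> 'e" where
  "dirichlet_op D Am L y = (THE x. x \<in> D \<and> Am x = 0 \<and> L x = y)"

definition Vk :: "(real \<Rightarrow> 'e \<Rightarrow> 'e::real_normed_vector) \<Rightarrow> (real \<Rightarrow> 'f \<Rightarrow> 'e) \<Rightarrow> (real \<Rightarrow> 'f \<Rightarrow> 'f)
    \<Rightarrow> nat \<Rightarrow> real \<Rightarrow> 'f \<Rightarrow> 'e" where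
  "Vk T0 V S k \<tau> y = (\<Sum>j<k. T0 (real (k - 1 - j) * \<tau>) (V \<tau> (S (real j * \<tau>) y)))"

definition bbT :: "(real \<Rightarrow> 'e \<Rightarrow> 'e::real_normed_vector) \<Rightarrow> (real \<Rightarrow> 'f \<Rightarrow> 'e) \<Rightarrow> (real \<Rightarrow> 'f \<Rightarrow> 'f)
    \<Rightarrow> real \<Rightarrow> 'e \<times> 'f \<Rightarrow> 'e \<times> 'f" where
  "bbT T0 V S \<tau> p = (T0 \<tau> (fst p) + V \<tau> (snd p), S \<tau> (snd p))"

definition calT :: "(real \<Rightarrow> 'e \<Rightarrow> 'e::real_normed_vector) \<Rightarrow> (real \<Rightarrow> 'f \<Rightarrow> 'e) \<Rightarrow> (real \<Rightarrow> 'f \<Rightarrow> 'f)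
    \<Rightarrow> real \<Rightarrow> 'e \<times> 'f \<Rightarrow> 'e \<times> 'f" where
  "calT T0 Q S t p = (T0 t (fst p) + Q t (snd p), S t (snd p))"

definition R0 :: "('f \<Rightarrow> 'e::real_normed_vector) \<Rightarrow> 'e \<times> 'f \<Rightarrow> 'e \<times> 'f" where
  "R0 D0 p = (fst p - D0 (snd p), snd p)"

definition R0inv :: "('f \<Rightarrow> 'e::real_normed_vector) \<Rightarrow> 'e \<times> 'f \<Rightarrow> 'e \<times> 'f" where
  "R0inv D0 p = (fst p + D0 (snd p), snd p)"

end

theory Submission
  imports Defs
begin

text \<open>Conjugating by \<open>R\<^sub>0\<close> turns the triangular matrix \<open>\<bbbT>(t/n)\<^sup>n\<close> into one with diagonal
  \<open>T\<^sub>0(t)\<close>, \<open>S(t)\<close> and upper right entry \<open>D\<^sub>0 S(t) - T\<^sub>0(t) D\<^sub>0 + V\<^sub>n(t/n)\<close>. On \<open>dom(B)\<close> the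
  corresponding entry of \<open>\<T>(t)\<close> is \<open>Q(t) = D\<^sub>0 S(t) - T\<^sub>0(t) D\<^sub>0 - \<integral>\<^sub>0\<^sup>t T\<^sub>0(t-s) D\<^sub>0 S(s) B ds\<close>,
  so the error at \<open>(x, y)\<close> is exactly \<open>V\<^sub>n(t/n) y + \<integral>\<^sub>0\<^sup>t T\<^sub>0(t-s) D\<^sub>0 S(s) B y ds\<close>, which
  tends to zero uniformly by hypothesis.\<close>

lemma c0_semigroup_zero: "c0_semigroup T \<Longrightarrow> T 0 = id"
  unfolding c0_semigroup_def by blast

lemma c0_semigroup_bounded_linear: "c0_semigroup T \<Longrightarrow> t \<ge> 0 \<Longrightarrow> bounded_linear (T t)"
  unfolding c0_semigroup_def by blast

lemma c0_semigroup_apply_add: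
  "c0_semigroup T \<Longrightarrow> s \<ge> 0 \<Longrightarrow> t \<ge> 0 \<Longrightarrow> T s (T t x) = T (s + t) x"
  unfolding c0_semigroup_def by (metis comp_apply)

lemma Vk_Suc:
  assumes T0: "c0_semigroup T0" and "\<tau> \<ge> 0"
  shows "Vk T0 V S (Suc n) \<tau> b = T0 \<tau> (Vk T0 V S n \<tau> b) + V \<tau> (S (real n * \<tau>) b)"
proof -
  have "T0 \<tau> (Vk T0 V S n \<tau> b) = (\<Sum>j<n. T0 \<tau> (T0 (real (n - 1 - j) * \<tau>) (V \<tau> (S (real j * \<tau>) b))))"
    unfolding Vk_def
    by (rule linear_sum[OF bounded_linear.linear[OF c0_semigroup_bounded_linear[OF T0 \<open>\<tau> \<ge> 0\<close>]]])
  also have "\<dots> = (\<Sum>j<n. T0 (real (Suc n - 1 - j) * \<tau>) (V \<tau> (S (real j * \<tau>) b)))"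
  proof (rule sum.cong)
    fix j assume "j \<in> {..<n}"
    then have "\<tau> + real (n - 1 - j) * \<tau> = real (Suc n - 1 - j) * \<tau>"
      by (simp add: of_nat_diff algebra_simps)
    then show "T0 \<tau> (T0 (real (n - 1 - j) * \<tau>) (V \<tau> (S (real j * \<tau>) b)))
        = T0 (real (Suc n - 1 - j) * \<tau>) (V \<tau> (S (real j * \<tau>) b))"
      using c0_semigroup_apply_add[OF T0 \<open>\<tau> \<ge> 0\<close>] \<open>\<tau> \<ge> 0\<close> by simp
  qed simp
  finally show ?thesis
    unfolding Vk_def by (simp add: c0_semigroup_zero[OF T0])
qed

lemma bbT_power:
  assumes T0: "c0_semigroup T0" and S: "c0_semigroup S" and "\<tau> \<ge> 0"
  shows "(bbT T0 V S \<tau> ^^ n) (a, b) = (T0 (real n * \<tau>) a + Vk T0 V S n \<tau> b, S (real n * \<tau>) b)"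
proof (induction n)
  case 0
  then show ?case by (simp add: Vk_def c0_semigroup_zero[OF T0] c0_semigroup_zero[OF S])
next
  case (Suc n)
  have T0_add: "T0 \<tau> (u + v) = T0 \<tau> u + T0 \<tau> v" for u v
    by (rule linear_add[OF bounded_linear.linear[OF c0_semigroup_bounded_linear[OF T0 \<open>\<tau> \<ge> 0\<close>]]])
  show ?case
    using Suc \<open>\<tau> \<ge> 0\<close>
    by (simp add: bbT_def T0_add Vk_Suc[OF T0] c0_semigroup_apply_add[OF T0]
        c0_semigroup_apply_add[OF S] algebra_simps)
qed

lemma R0inv_bbT_power_R0:
  assumes T0: "c0_semigroup T0" and S: "c0_semigroup S" and "t \<ge> 0" and "n > 0"
  shows "R0inv D ((bbT T0 V S (t / real n) ^^ n) (R0 D (x, y)))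
    = (T0 t x + (D (S t y) - T0 t (D y) + Vk T0 V S n (t / real n) y), S t y)"
proof -
  have "real n * (t / real n) = t"
    using \<open>n > 0\<close> by simp
  moreover have "T0 t (x - D y) = T0 t x - T0 t (D y)"
    by (rule linear_diff[OF bounded_linear.linear[OF c0_semigroup_bounded_linear[OF T0 \<open>t \<ge> 0\<close>]]])
  ultimately show ?thesis
    using \<open>t \<ge> 0\<close> by (simp add: R0_def R0inv_def bbT_power[OF T0 S])
qed

lemma uniform_limit_dist_transfer:
  assumes "uniform_limit K f g F"
    and "eventually (\<lambda>n. \<forall>t\<in>K. dist (f' n t) (g' t) = dist (f n t) (g t)) F"
  shows "uniform_limit K f' g' F"
  unfolding uniform_limit_iff
proof (intro allI impI)
  fix e :: real assume "e > 0"
  with assms(1) have "eventually (\<lambda>n. \<forall>t\<in>K. dist (f n t) (g t) < e) F"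
    unfolding uniform_limit_iff by blast
  with assms(2) show "eventually (\<lambda>n. \<forall>t\<in>K. dist (f' n t) (g' t) < e) F"
    by eventually_elim simp
qed

theorem proposition3p4:
  fixes domAm :: "'e::banach set" and Am :: "'e \<Rightarrow> 'e"
    and domB :: "'f::banach set" and B :: "'f \<Rightarrow> 'f"
    and L :: "'e \<Rightarrow> 'f"
    and T0 :: "real \<Rightarrow> 'e \<Rightarrow> 'e" and S :: "real \<Rightarrow> 'f \<Rightarrow> 'f"
    and Q :: "real \<Rightarrow> 'f \<Rightarrow> 'e" and V :: "real \<Rightarrow> 'f \<Rightarrow> 'e"
    and y :: 'f
  assumes Am_lin: "linear_op domAm Am"
    and B_lin: "linear_op domB B"
    and L_lin: "linear_op domAm L"
    and L_surj: "L ` domAm = UNIV"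
    and L_bdd: "\<exists>C. \<forall>x\<in>domAm. norm (L x) \<le> C * (norm x + norm (Am x))"
    and A0_gen: "generates_c0 {x \<in> domAm. L x = 0} Am T0"
    and B_gen: "generates_c0 domB B S"
    and closed_graph: "closed ((\<lambda>x. (x, (Am x, L x))) ` domAm)"
    and A0_inv: "boundedly_invertible {x \<in> domAm. L x = 0} Am"
    and B_inv: "boundedly_invertible domB B"
    and Q_bdd: "\<forall>t\<ge>0. bounded_linear (Q t)"
    and Q_eq: "\<forall>t\<ge>0. \<forall>z\<in>domB. Q t z =
        dirichlet_op domAm Am L (S t z) - T0 t (dirichlet_op domAm Am L z)
        - integral {0..t} (\<lambda>s. T0 (t - s) (dirichlet_op domAm Am L (S s (B z))))"
    and Q_limsup: "Limsup (at_right 0) (\<lambda>t. ereal (onorm (Q t))) < \<infinity>"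
    and V_lin: "\<forall>\<tau>>0. linear_op domB (V \<tau>)"
    and y_dom: "y \<in> domB"
    and V_conv: "\<forall>K. compact K \<and> K \<subseteq> {0..} \<longrightarrow>
        uniform_limit K (\<lambda>n t. Vk T0 V S n (t / real n) y)
          (\<lambda>t. - integral {0..t} (\<lambda>s. T0 (t - s) (dirichlet_op domAm Am L (S s (B y)))))
          sequentially"
  shows "\<forall>x tmax. tmax > 0 \<longrightarrow>
     uniform_limit {0..tmax}
       (\<lambda>n t. R0inv (dirichlet_op domAm Am L)
                 ((bbT T0 V S (t / real n) ^^ n) (R0 (dirichlet_op domAm Am L) (x, y))))
       (\<lambda>t. calT T0 Q S t (x, y)) sequentially"
proof (intro allI impI)
  fix x :: 'e and tmax :: real
  let ?D = "dirichlet_op domAm Am L"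
  let ?I = "\<lambda>t. integral {0..t} (\<lambda>s. T0 (t - s) (?D (S s (B y))))"
  have T0: "c0_semigroup T0" and S: "c0_semigroup S"
    using A0_gen B_gen unfolding generates_c0_def by auto
  have error_eq: "dist (R0inv ?D ((bbT T0 V S (t / real n) ^^ n) (R0 ?D (x, y)))) (calT T0 Q S t (x, y))
      = dist (Vk T0 V S n (t / real n) y) (- ?I t)" if "t \<ge> 0" "n > 0" for n t
  proof -
    have "Q t y = ?D (S t y) - T0 t (?D y) - ?I t"
      using Q_eq y_dom \<open>t \<ge> 0\<close> by blast
    then show ?thesis
      using that by (simp add: R0inv_bbT_power_R0[OF T0 S] calT_def dist_Pair_Pair dist_norm)
  qed
  have Vk_limit: "uniform_limit {0..tmax} (\<lambda>n t. Vk T0 V S n (t / real n) y) (\<lambda>t. - ?I t) sequentially"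
    using V_conv by simp
  show "uniform_limit {0..tmax}
      (\<lambda>n t. R0inv ?D ((bbT T0 V S (t / real n) ^^ n) (R0 ?D (x, y))))
      (\<lambda>t. calT T0 Q S t (x, y)) sequentially"
    by (rule uniform_limit_dist_transfer[OF Vk_limit eventually_mono[OF eventually_gt_at_top[of 0]]])
      (simp add: error_eq)
qed

end
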